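(* Let $\vec{\mathcal G}$ be an ergodic graph of a deterministic two-player mean-payoff game and suppose $r\in\mathcal P^{\sigma,\tau}$ for some $(\sigma,\tau)\in\Xi$. If $(i,j)\in E$ with $i\in V_{\min}$ and $j\ne\tau(i)$, then $(x,r_{-ij})\in\mathcal P^{\sigma,\tau}$ for all $x>\lambda^{\sigma,\tau}(r)+u^{\sigma,\tau}_i(r)-u^{\sigma,\tau}_j(r)$. If $(i,j)\in E$ with $i\in V_{\max}$ and $j\ne\sigma(i)$, then $(x,r_{-ij})\in\mathcal P^{\sigma,\tau}$ for all $x<\lambda^{\sigma,\tau}(r)+u^{\sigma,\tau}_i(r)-u^{\sigma,\tau}_j(r)$.
   Context: Setting: directed graph $\vec{\mathcal G}=([n],E)$ without multiple edges (loops allowed), each vertex having an outgoing edge, $[n]=V_{\max}\uplus V_{\min}$, weights $r\in\mathbb R^E=\mathbb R^m$; $(x,r_{-ij})$ is $r$ with coordinate $ij$ replaced by $x$. Ergodic equation in $(\lambda,u)$: $\lambda+u_i=\max_{(i,j)\in E}\{r_{ij}+u_j\}$ ($i\in V_{\max}$), $\lambda+u_i=\min_{(i,j)\in E}\{r_{ij}+u_j\}$ ($i\in V_{\min}$); $u$ is a bias if $(\lambda,u)$ solves it; the graph is ergodic if it is solvable for every $r$. Policies $\sigma,\tau$ choose outgoing edges at Max/Min vertices; a pair is bias-induced if some bias $u$ has $\sigma(i)$ attaining the max and $\tau(i)$ attaining the min at every vertex. $\vec{\mathcal G}^{\sigma,\tau}$ keeps at each vertex only the chosen edge; $\Xi$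 is the set of pairs with exactly one directed cycle in $\vec{\mathcal G}^{\sigma,\tau}$. $\lambda^{\sigma,\tau}(r)$ is the mean weight of that cycle and $u^{\sigma,\tau}(r)_l$ is the total weight, for edge weights $r_{ij}-\lambda^{\sigma,\tau}(r)$, of the path in $\vec{\mathcal G}^{\sigma,\tau}$ from $l$ to the smallest-index vertex on the cycle. $\mathcal P^{\sigma,\tau}$ is the set of $r$ such that $(\sigma,\tau)$ is the only pair of bias-induced policies for weights $r$. *)

theory Defs
  imports Complex_Main
begin

text \<open>Vertices are the natural numbers 1..n; edges are pairs; weights are functions on pairs
  (only values on E matter).\<close>

definition game_graph :: "nat \<Rightarrow> (nat \<times> nat) set \<Rightarrow> nat set \<Rightarrow> nat set \<Rightarrow> bool" where
  "game_graph n E Vmax Vmin \<equiv> E \<subseteq> {1..n} \<times> {1..n} \<and> (\<forall>i\<in>{1..n}. \<exists>j. (i,j) \<in> E)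
     \<and> Vmax \<union> Vmin = {1..n} \<and> Vmax \<inter> Vmin = {}"

definition is_bias :: "(nat \<times> nat) set \<Rightarrow> nat set \<Rightarrow> nat set \<Rightarrow> (nat \<times> nat \<Rightarrow> real)
    \<Rightarrow> real \<Rightarrow> (nat \<Rightarrow> real) \<Rightarrow> bool" where
  "is_bias E Vmax Vmin r lam u \<equiv>
     (\<forall>i\<in>Vmax. lam + u i = Max {r (i,j) + u j | j. (i,j) \<in> E}) \<and>
     (\<forall>i\<in>Vmin. lam + u i = Min {r (i,j) + u j | j. (i,j) \<in> E})"

definition ergodic :: "(nat \<times> nat) set \<Rightarrow> nat set \<Rightarrow> nat set \<Rightarrow> bool" where
  "ergodic E Vmax Vmin \<equiv> \<forall>r. \<exists>lam u. is_bias E Vmax Vmin r lam u"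

definition policies :: "(nat \<times> nat) set \<Rightarrow> nat set \<Rightarrow> nat set \<Rightarrow> (nat \<Rightarrow> nat) \<Rightarrow> (nat \<Rightarrow> nat) \<Rightarrow> bool" where
  "policies E Vmax Vmin \<sigma> \<tau> \<equiv> (\<forall>i\<in>Vmax. (i, \<sigma> i) \<in> E) \<and> (\<forall>i\<in>Vmin. (i, \<tau> i) \<in> E)"

definition bias_induced :: "(nat \<times> nat) set \<Rightarrow> nat set \<Rightarrow> nat set \<Rightarrow> (nat \<times> nat \<Rightarrow> real)
    \<Rightarrow> (nat \<Rightarrow> nat) \<Rightarrow> (nat \<Rightarrow> nat) \<Rightarrow> bool" where
  "bias_induced E Vmax Vmin r \<sigma> \<tau> \<equiv> policies E Vmax Vmin \<sigma> \<tau> \<and>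
     (\<exists>lam u. is_bias E Vmax Vmin r lam u \<and>
        (\<forall>i\<in>Vmax. r (i, \<sigma> i) + u (\<sigma> i) = Max {r (i,j) + u j | j. (i,j) \<in> E}) \<and>
        (\<forall>i\<in>Vmin. r (i, \<tau> i) + u (\<tau> i) = Min {r (i,j) + u j | j. (i,j) \<in> E}))"

definition pol_map :: "nat set \<Rightarrow> (nat \<Rightarrow> nat) \<Rightarrow> (nat \<Rightarrow> nat) \<Rightarrow> nat \<Rightarrow> nat" where
  "pol_map Vmax \<sigma> \<tau> i = (if i \<in> Vmax then \<sigma> i else \<tau> i)"

definition cycles :: "nat \<Rightarrow> (nat \<Rightarrow> nat) \<Rightarrow> nat set set" where
  "cycles n f = {C. \<exists>i\<in>{1..n}. \<exists>k>0. (f ^^ k) i = i \<and> C = {(f ^^ m) i | m. True}}"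

definition Xi :: "nat \<Rightarrow> (nat \<times> nat) set \<Rightarrow> nat set \<Rightarrow> nat set \<Rightarrow> ((nat \<Rightarrow> nat) \<times> (nat \<Rightarrow> nat)) set" where
  "Xi n E Vmax Vmin = {(\<sigma>, \<tau>). policies E Vmax Vmin \<sigma> \<tau> \<and> (\<exists>!C. C \<in> cycles n (pol_map Vmax \<sigma> \<tau>))}"

definition the_cycle :: "nat \<Rightarrow> nat set \<Rightarrow> (nat \<Rightarrow> nat) \<Rightarrow> (nat \<Rightarrow> nat) \<Rightarrow> nat set" where
  "the_cycle n Vmax \<sigma> \<tau> = (THE C. C \<in> cycles n (pol_map Vmax \<sigma> \<tau>))"

definition lam_pol :: "nat \<Rightarrow> nat set \<Rightarrow> (nat \<Rightarrow> nat) \<Rightarrow> (nat \<Rightarrow> nat) \<Rightarrow> (nat \<times> nat \<Rightarrow> real) \<Rightarrow> real" where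
  "lam_pol n Vmax \<sigma> \<tau> r =
     (let C = the_cycle n Vmax \<sigma> \<tau>; f = pol_map Vmax \<sigma> \<tau>
      in (\<Sum>i\<in>C. r (i, f i)) / real (card C))"

text \<open>u^{sigma,tau}(r)_l: weight (with weights r - lambda) of the path in G^{sigma,tau}
  from l to the smallest-index vertex of the cycle.\<close>
definition u_pol :: "nat \<Rightarrow> nat set \<Rightarrow> (nat \<Rightarrow> nat) \<Rightarrow> (nat \<Rightarrow> nat) \<Rightarrow> (nat \<times> nat \<Rightarrow> real) \<Rightarrow> nat \<Rightarrow> real" where
  "u_pol n Vmax \<sigma> \<tau> r l =
     (let f = pol_map Vmax \<sigma> \<tau>; c = Min (the_cycle n Vmax \<sigma> \<tau>);
          k = (LEAST k. (f ^^ k) l = c)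
      in (\<Sum>t<k. r ((f ^^ t) l, f ((f ^^ t) l)) - lam_pol n Vmax \<sigma> \<tau> r))"

text \<open>P^{sigma,tau}: weights for which (sigma,tau) is the only bias-induced pair
  (policies compared on their domains Vmax resp. Vmin).\<close>
definition P_set :: "(nat \<times> nat) set \<Rightarrow> nat set \<Rightarrow> nat set \<Rightarrow> (nat \<Rightarrow> nat) \<Rightarrow> (nat \<Rightarrow> nat)
    \<Rightarrow> (nat \<times> nat \<Rightarrow> real) set" where
  "P_set E Vmax Vmin \<sigma> \<tau> = {r. bias_induced E Vmax Vmin r \<sigma> \<tau> \<and>
     (\<forall>\<sigma>' \<tau>'. bias_induced E Vmax Vmin r \<sigma>' \<tau>' \<longrightarrow>
        (\<forall>i\<in>Vmax. \<sigma>' i = \<sigma> i) \<and> (\<forall>i\<in>Vmin. \<tau>' i = \<tau> i))}"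

end

theory Submission
  imports Defs
begin

(* Call (lam, u, sigma, tau) a certificate for r if at every vertex i the optimum of
   r (i, j) + u j over the edges (i, j) equals lam + u i and is attained by sigma resp. tau;
   r admits one exactly when (sigma, tau) is bias-induced. For r in P^{sigma,tau} every
   certificate is strict (any other edge at a Max vertex is strictly worse, at a Min vertex strictly
   better), since otherwise switching that single edge gives a second bias-induced pair. Conversely
   a strict certificate gives uniqueness: for any other certificate (lam', u', sigma', tau') the
   difference d = u - u' increases by at least lam - lam' along the mixed policy (sigma, tau') and
   decreases by at least as much along (sigma', tau). Following each to a cycle gives lam = lam';
   strictness forbids deviations from (sigma, tau) on these cycles, so both reach the unique cycle
   of (sigma, tau), where d is constant, and the resulting sandwich forces sigma' = sigma and
   tau' = tau. On the unique cycle the certificate identifies lam^{sigma,tau}(r) with lam and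
   u^{sigma,tau}(r) with u up to an additive constant, so moving the weight of a non-policy edge
   past the threshold lam + u i - u j keeps the certificate strict. *)

lemma funpow_closed:
  assumes "\<forall>z\<in>V. \<phi> z \<in> V" and "z \<in> V"
  shows "(\<phi> ^^ t) z \<in> V"
  by (induction t) (use assms in auto)

lemma funpow_eventually_periodic:
  assumes "finite V" and closed: "\<forall>z\<in>V. \<phi> z \<in> V" and z: "z \<in> V"
  obtains m p where "0 < p" and "(\<phi> ^^ p) ((\<phi> ^^ m) z) = (\<phi> ^^ m) z"
proof -
  have "range (\<lambda>t. (\<phi> ^^ t) z) \<subseteq> V"
    using funpow_closed[OF closed z] by auto
  then have "\<not> inj (\<lambda>t. (\<phi> ^^ t) z)"
    using \<open>finite V\<close> finite_imageD finite_subset infinite_UNIV_nat by blast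
  then obtain a b where "a < b" and ab: "(\<phi> ^^ a) z = (\<phi> ^^ b) z"
    unfolding inj_def by (metis linorder_neqE_nat)
  have "(\<phi> ^^ (b - a)) ((\<phi> ^^ a) z) = (\<phi> ^^ (b - a + a)) z"
    by (simp add: funpow_add)
  also have "\<dots> = (\<phi> ^^ a) z"
    using \<open>a < b\<close> ab by simp
  finally have "(\<phi> ^^ (b - a)) ((\<phi> ^^ a) z) = (\<phi> ^^ a) z" .
  with \<open>a < b\<close> show thesis using that[of "b - a" a] by simp
qed

lemma funpow_drift:
  fixes d :: "'a \<Rightarrow> real"
  assumes closed: "\<forall>z\<in>V. \<phi> z \<in> V" and drift: "\<forall>z\<in>V. \<delta> + d z \<le> d (\<phi> z)" and "z \<in> V"
  shows "\<delta> * t + d z \<le> d ((\<phi> ^^ t) z)"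
proof (induction t)
  case (Suc t)
  have "\<delta> + d ((\<phi> ^^ t) z) \<le> d ((\<phi> ^^ Suc t) z)"
    using drift funpow_closed[OF closed \<open>z \<in> V\<close>] by simp
  with Suc show ?case by (simp add: algebra_simps)
qed simp

lemma drift_nonpos:
  fixes d :: "'a \<Rightarrow> real"
  assumes "finite V" and closed: "\<forall>z\<in>V. \<phi> z \<in> V" and drift: "\<forall>z\<in>V. \<delta> + d z \<le> d (\<phi> z)"
    and "z \<in> V"
  shows "\<delta> \<le> 0"
proof -
  obtain m p where "0 < p" and per: "(\<phi> ^^ p) ((\<phi> ^^ m) z) = (\<phi> ^^ m) z"
    using funpow_eventually_periodic[OF assms(1,2,4)] .
  define y where "y = (\<phi> ^^ m) z"
  have "y \<in> V" unfolding y_def using funpow_closed[OF closed \<open>z \<in> V\<close>] .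
  have "\<delta> * p + d y \<le> d ((\<phi> ^^ p) y)" using funpow_drift[OF closed drift \<open>y \<in> V\<close>] .
  with per have "\<delta> * p \<le> 0" by (simp add: y_def)
  with \<open>0 < p\<close> show ?thesis by (simp add: mult_le_0_iff)
qed

lemma periodic_potential_step_eq:
  fixes e :: "'a \<Rightarrow> real"
  assumes closed: "\<forall>z\<in>V. \<phi> z \<in> V" and mono: "\<forall>z\<in>V. e z \<le> e (\<phi> z)"
    and "y \<in> V" and "0 < p" and per: "(\<phi> ^^ p) y = y"
  shows "e (\<phi> y) = e y"
proof -
  have "\<phi> y \<in> V" using closed \<open>y \<in> V\<close> by blast
  have "(\<phi> ^^ (p - 1)) (\<phi> y) = (\<phi> ^^ Suc (p - 1)) y" by (simp only: funpow_Suc_right o_apply)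
  also have "\<dots> = y" using \<open>0 < p\<close> per by simp
  finally have "e (\<phi> y) \<le> e y"
    using funpow_drift[OF closed _ \<open>\<phi> y \<in> V\<close>, of 0 e "p - 1"] mono by simp
  with mono \<open>y \<in> V\<close> show ?thesis by (simp add: order_antisym)
qed

lemma periodic_orbit_follows:
  fixes e :: "'a \<Rightarrow> real"
  assumes closed: "\<forall>z\<in>V. \<phi> z \<in> V" and mono: "\<forall>z\<in>V. e z \<le> e (\<phi> z)"
    and strict: "\<forall>z\<in>V. \<phi> z \<noteq> f z \<longrightarrow> e z < e (\<phi> z)"
    and "y \<in> V" and "0 < p" and per: "(\<phi> ^^ p) y = y"
  shows "(\<phi> ^^ t) y = (f ^^ t) y \<and> e ((f ^^ t) y) = e y"
proof (induction t)
  case (Suc t)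
  define w where "w = (\<phi> ^^ t) y"
  have "w \<in> V" using funpow_closed[OF closed \<open>y \<in> V\<close>] by (simp add: w_def)
  moreover have "(\<phi> ^^ p) w = w"
    unfolding w_def by (metis per funpow_add add.commute o_apply)
  ultimately have "e (\<phi> w) = e w"
    using periodic_potential_step_eq[OF closed mono] \<open>0 < p\<close> by blast
  then have "\<phi> w = f w" using strict \<open>w \<in> V\<close> by force
  with Suc \<open>e (\<phi> w) = e w\<close> show ?case by (simp add: w_def)
qed simp

lemma reaches_periodic_point:
  fixes e :: "'a \<Rightarrow> real"
  assumes "finite V" and closed: "\<forall>z\<in>V. \<phi> z \<in> V" and mono: "\<forall>z\<in>V. e z \<le> e (\<phi> z)"
    and strict: "\<forall>z\<in>V. \<phi> z \<noteq> f z \<longrightarrow> e z < e (\<phi> z)" and "z \<in> V"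
  obtains y p where "y \<in> V" and "0 < p" and "(f ^^ p) y = y" and "e z \<le> e y"
    and "\<And>t. e ((f ^^ t) y) = e y"
proof -
  obtain m p where "0 < p" and per: "(\<phi> ^^ p) ((\<phi> ^^ m) z) = (\<phi> ^^ m) z"
    using funpow_eventually_periodic[OF assms(1,2,5)] .
  define y where "y = (\<phi> ^^ m) z"
  have "y \<in> V" using funpow_closed[OF closed \<open>z \<in> V\<close>] by (simp add: y_def)
  have "e z \<le> e y" using funpow_drift[of V \<phi> 0 e] closed mono \<open>z \<in> V\<close> by (simp add: y_def)
  note follows = periodic_orbit_follows[OF closed mono strict \<open>y \<in> V\<close> \<open>0 < p\<close> per[folded y_def]]
  have "(f ^^ p) y = y" using follows[of p] per by (simp add: y_def)
  with follows show thesis using that[OF \<open>y \<in> V\<close> \<open>0 < p\<close> _ \<open>e z \<le> e y\<close>] by blast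
qed

lemma drift_sandwich_agree:
  fixes d :: "'a \<Rightarrow> real"
  assumes "finite V" and g_closed: "\<forall>z\<in>V. g z \<in> V" and h_closed: "\<forall>z\<in>V. h z \<in> V"
    and g_up: "\<forall>z\<in>V. \<delta> + d z \<le> d (g z)"
    and g_strict: "\<forall>z\<in>V. g z \<noteq> f z \<longrightarrow> \<delta> + d z < d (g z)"
    and h_down: "\<forall>z\<in>V. d (h z) \<le> \<delta> + d z"
    and h_strict: "\<forall>z\<in>V. h z \<noteq> f z \<longrightarrow> d (h z) < \<delta> + d z"
    and same_orbit: "\<And>y y' p p'. y \<in> V \<Longrightarrow> 0 < p \<Longrightarrow> (f ^^ p) y = y
      \<Longrightarrow> y' \<in> V \<Longrightarrow> 0 < p' \<Longrightarrow> (f ^^ p') y' = y' \<Longrightarrow> \<exists>s. y' = (f ^^ s) y"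
    and "k \<in> V"
  shows "g k = f k \<and> h k = f k"
proof -
  have "\<delta> \<le> 0" using drift_nonpos[OF \<open>finite V\<close> g_closed g_up \<open>k \<in> V\<close>] .
  have "\<forall>z\<in>V. - \<delta> + - d z \<le> - d (h z)" using h_down by force
  from drift_nonpos[OF \<open>finite V\<close> h_closed this \<open>k \<in> V\<close>] \<open>\<delta> \<le> 0\<close> have "\<delta> = 0" by simp
  then have g_mono: "\<forall>z\<in>V. d z \<le> d (g z)"
    and g_strict_mono: "\<forall>z\<in>V. g z \<noteq> f z \<longrightarrow> d z < d (g z)"
    and h_mono: "\<forall>z\<in>V. - d z \<le> - d (h z)"
    and h_strict_mono: "\<forall>z\<in>V. h z \<noteq> f z \<longrightarrow> - d z < - d (h z)"
    using g_up g_strict h_down h_strict by auto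
  have "g k \<in> V" "h k \<in> V" using g_closed h_closed \<open>k \<in> V\<close> by auto
  obtain y p where "y \<in> V" "0 < p" "(f ^^ p) y = y" "d (g k) \<le> d y"
    and d_orbit: "\<And>t. d ((f ^^ t) y) = d y"
    using reaches_periodic_point[OF \<open>finite V\<close> g_closed g_mono g_strict_mono \<open>g k \<in> V\<close>] by blast
  obtain y' p' where "y' \<in> V" "0 < p'" "(f ^^ p') y' = y'" "- d (h k) \<le> - d y'"
    using reaches_periodic_point[OF \<open>finite V\<close> h_closed h_mono h_strict_mono \<open>h k \<in> V\<close>] by blast
  obtain s where "y' = (f ^^ s) y"
    using same_orbit[OF \<open>y \<in> V\<close> \<open>0 < p\<close> \<open>(f ^^ p) y = y\<close> \<open>y' \<in> V\<close> \<open>0 < p'\<close> \<open>(f ^^ p') y' = y'\<close>] ..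
  then have "d y' = d y" using d_orbit by simp
  have "d k \<le> d (g k)" "d (h k) \<le> d k" using g_mono h_mono \<open>k \<in> V\<close> by auto
  with \<open>d (g k) \<le> d y\<close> \<open>- d (h k) \<le> - d y'\<close> \<open>d y' = d y\<close>
  have "\<not> d k < d (g k)" "\<not> - d k < - d (h k)" by linarith+
  then show ?thesis using g_strict_mono h_strict_mono \<open>k \<in> V\<close> by blast
qed

definition bias_certificate :: "(nat \<times> nat) set \<Rightarrow> nat set \<Rightarrow> nat set \<Rightarrow> (nat \<times> nat \<Rightarrow> real)
    \<Rightarrow> real \<Rightarrow> (nat \<Rightarrow> real) \<Rightarrow> (nat \<Rightarrow> nat) \<Rightarrow> (nat \<Rightarrow> nat) \<Rightarrow> bool" where
  "bias_certificate E Vmax Vmin r lam u \<sigma> \<tau> \<longleftrightarrow> policies E Vmax Vmin \<sigma> \<tau> \<and>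
     (\<forall>i\<in>Vmax. r (i, \<sigma> i) + u (\<sigma> i) = lam + u i \<and> (\<forall>j. (i, j) \<in> E \<longrightarrow> r (i, j) + u j \<le> lam + u i)) \<and>
     (\<forall>i\<in>Vmin. r (i, \<tau> i) + u (\<tau> i) = lam + u i \<and> (\<forall>j. (i, j) \<in> E \<longrightarrow> lam + u i \<le> r (i, j) + u j))"

definition policies_strictly_optimal :: "(nat \<times> nat) set \<Rightarrow> nat set \<Rightarrow> nat set
    \<Rightarrow> (nat \<times> nat \<Rightarrow> real) \<Rightarrow> real \<Rightarrow> (nat \<Rightarrow> real) \<Rightarrow> (nat \<Rightarrow> nat) \<Rightarrow> (nat \<Rightarrow> nat) \<Rightarrow> bool" where
  "policies_strictly_optimal E Vmax Vmin r lam u \<sigma> \<tau> \<longleftrightarrow>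
     (\<forall>i\<in>Vmax. \<forall>j. (i, j) \<in> E \<longrightarrow> j \<noteq> \<sigma> i \<longrightarrow> r (i, j) + u j < lam + u i) \<and>
     (\<forall>i\<in>Vmin. \<forall>j. (i, j) \<in> E \<longrightarrow> j \<noteq> \<tau> i \<longrightarrow> lam + u i < r (i, j) + u j)"

lemma game_graph_finite_successor_values:
  assumes "game_graph n E Vmax Vmin"
  shows "finite {r (i, j) + u j | j. (i, j) \<in> E}"
proof -
  have "{r (i, j) + u j | j. (i, j) \<in> E} \<subseteq> (\<lambda>j. r (i, j) + u j) ` {1..n}"
    using assms unfolding game_graph_def by blast
  then show ?thesis using finite_subset by blast
qed

lemma Max_attained_iff:
  fixes S :: "'a::linorder set"
  assumes "finite S" and "a \<in> S"
  shows "v = Max S \<and> a = Max S \<longleftrightarrow> a = v \<and> (\<forall>x\<in>S. x \<le> v)"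
  using assms Max_eq_iff[of S v] by auto

lemma Min_attained_iff:
  fixes S :: "'a::linorder set"
  assumes "finite S" and "a \<in> S"
  shows "v = Min S \<and> a = Min S \<longleftrightarrow> a = v \<and> (\<forall>x\<in>S. v \<le> x)"
  using assms Min_eq_iff[of S v] by auto

lemma bias_induced_iff_certificate:
  assumes "game_graph n E Vmax Vmin"
  shows "bias_induced E Vmax Vmin r \<sigma> \<tau> \<longleftrightarrow> (\<exists>lam u. bias_certificate E Vmax Vmin r lam u \<sigma> \<tau>)"
proof (cases "policies E Vmax Vmin \<sigma> \<tau>")
  case True
  define S where "S u i = {r (i, j) + u j | j. (i, j) \<in> E}" for u i
  have fin: "finite (S u i)" for u i
    unfolding S_def by (rule game_graph_finite_successor_values[OF assms])
  have "r (i, \<sigma> i) + u (\<sigma> i) \<in> S u i" if "i \<in> Vmax" for u i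
    using True that unfolding policies_def S_def by blast
  note Max_iff = Max_attained_iff[OF fin this]
  have "r (i, \<tau> i) + u (\<tau> i) \<in> S u i" if "i \<in> Vmin" for u i
    using True that unfolding policies_def S_def by blast
  note Min_iff = Min_attained_iff[OF fin this]
  have certificate_iff: "is_bias E Vmax Vmin r lam u
      \<and> (\<forall>i\<in>Vmax. r (i, \<sigma> i) + u (\<sigma> i) = Max (S u i))
      \<and> (\<forall>i\<in>Vmin. r (i, \<tau> i) + u (\<tau> i) = Min (S u i))
      \<longleftrightarrow> bias_certificate E Vmax Vmin r lam u \<sigma> \<tau>" for lam u
  proof -
    have "is_bias E Vmax Vmin r lam u
      \<and> (\<forall>i\<in>Vmax. r (i, \<sigma> i) + u (\<sigma> i) = Max (S u i))
      \<and> (\<forall>i\<in>Vmin. r (i, \<tau> i) + u (\<tau> i) = Min (S u i))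
      \<longleftrightarrow> (\<forall>i\<in>Vmax. lam + u i = Max (S u i) \<and> r (i, \<sigma> i) + u (\<sigma> i) = Max (S u i))
        \<and> (\<forall>i\<in>Vmin. lam + u i = Min (S u i) \<and> r (i, \<tau> i) + u (\<tau> i) = Min (S u i))"
      unfolding is_bias_def S_def ball_conj_distrib by blast
    also have "\<dots> \<longleftrightarrow>
        (\<forall>i\<in>Vmax. r (i, \<sigma> i) + u (\<sigma> i) = lam + u i \<and> (\<forall>x\<in>S u i. x \<le> lam + u i))
      \<and> (\<forall>i\<in>Vmin. r (i, \<tau> i) + u (\<tau> i) = lam + u i \<and> (\<forall>x\<in>S u i. lam + u i \<le> x))"
      using Max_iff Min_iff by (simp cong: ball_cong)
    also have "\<dots> \<longleftrightarrow> bias_certificate E Vmax Vmin r lam u \<sigma> \<tau>"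
      using True unfolding bias_certificate_def S_def by blast
    finally show ?thesis .
  qed
  then show ?thesis using True unfolding bias_induced_def S_def by blast
next
  case False
  then show ?thesis unfolding bias_induced_def bias_certificate_def by blast
qed

lemma pol_map_closed:
  assumes "game_graph n E Vmax Vmin" and "policies E Vmax Vmin \<sigma> \<tau>"
  shows "\<forall>z\<in>{1..n}. pol_map Vmax \<sigma> \<tau> z \<in> {1..n}"
proof
  fix z assume "z \<in> {1..n}"
  then have "z \<in> Vmax \<or> z \<in> Vmin" and "E \<subseteq> {1..n} \<times> {1..n}"
    using assms(1) unfolding game_graph_def by auto
  then show "pol_map Vmax \<sigma> \<tau> z \<in> {1..n}"
    using assms(2) unfolding policies_def pol_map_def by auto
qed

lemma Xi_periodic_points_same_orbit:
  assumes "(\<sigma>, \<tau>) \<in> Xi n E Vmax Vmin" and f_def: "f = pol_map Vmax \<sigma> \<tau>"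
    and "y \<in> {1..n}" "0 < p" "(f ^^ p) y = y"
    and "y' \<in> {1..n}" "0 < p'" "(f ^^ p') y' = y'"
  shows "\<exists>s. y' = (f ^^ s) y"
proof -
  have "\<exists>!C. C \<in> cycles n f" using assms(1) unfolding Xi_def f_def by simp
  moreover have "{(f ^^ m) y | m. True} \<in> cycles n f" "{(f ^^ m) y' | m. True} \<in> cycles n f"
    using assms(3-8) unfolding cycles_def by blast+
  ultimately have "{(f ^^ m) y | m. True} = {(f ^^ m) y' | m. True}" by blast
  moreover have "y' \<in> {(f ^^ m) y' | m. True}" by (metis (mono_tags) funpow_0 mem_Collect_eq)
  ultimately show ?thesis by blast
qed

lemma certificate_drift:
  assumes cert: "bias_certificate E Vmax Vmin r lam u \<sigma> \<tau>"
    and cert': "bias_certificate E Vmax Vmin r lam' u' \<sigma>' \<tau>'" and "z \<in> Vmax \<union> Vmin"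
  shows "(lam - lam') + (u z - u' z) \<le> u (pol_map Vmax \<sigma> \<tau>' z) - u' (pol_map Vmax \<sigma> \<tau>' z)"
proof (cases "z \<in> Vmax")
  case True
  then have "r (z, \<sigma> z) + u (\<sigma> z) = lam + u z" "r (z, \<sigma> z) + u' (\<sigma> z) \<le> lam' + u' z"
    using cert cert' unfolding bias_certificate_def policies_def by auto
  with True show ?thesis by (simp add: pol_map_def)
next
  case False
  with \<open>z \<in> Vmax \<union> Vmin\<close> have "z \<in> Vmin" by blast
  then have "lam + u z \<le> r (z, \<tau>' z) + u (\<tau>' z)" "r (z, \<tau>' z) + u' (\<tau>' z) = lam' + u' z"
    using cert cert' unfolding bias_certificate_def policies_def by auto
  with False show ?thesis by (simp add: pol_map_def)
qed

lemma strictly_optimal_certificate_unique: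
  assumes gg: "game_graph n E Vmax Vmin" and xi: "(\<sigma>, \<tau>) \<in> Xi n E Vmax Vmin"
    and cert: "bias_certificate E Vmax Vmin r lam u \<sigma> \<tau>"
    and strict: "policies_strictly_optimal E Vmax Vmin r lam u \<sigma> \<tau>"
    and cert': "bias_certificate E Vmax Vmin r lam' u' \<sigma>' \<tau>'"
  shows "(\<forall>i\<in>Vmax. \<sigma>' i = \<sigma> i) \<and> (\<forall>i\<in>Vmin. \<tau>' i = \<tau> i)"
proof -
  define f g h where "f = pol_map Vmax \<sigma> \<tau>" and "g = pol_map Vmax \<sigma> \<tau>'"
    and "h = pol_map Vmax \<sigma>' \<tau>"
  define d where "d z = u z - u' z" for z
  have V: "Vmax \<union> Vmin = {1..n}" "Vmax \<inter> Vmin = {}" using gg unfolding game_graph_def by auto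
  have pol: "policies E Vmax Vmin \<sigma> \<tau>'" "policies E Vmax Vmin \<sigma>' \<tau>"
    using cert cert' unfolding bias_certificate_def policies_def by auto
  have g_up: "\<forall>z\<in>{1..n}. (lam - lam') + d z \<le> d (g z)"
    using certificate_drift[OF cert cert'] V unfolding d_def g_def by auto
  have h_down: "\<forall>z\<in>{1..n}. d (h z) \<le> (lam - lam') + d z"
    using certificate_drift[OF cert' cert] V unfolding d_def h_def by (simp add: algebra_simps)
  have g_strict: "\<forall>z\<in>{1..n}. g z \<noteq> f z \<longrightarrow> (lam - lam') + d z < d (g z)"
  proof (intro ballI impI)
    fix z assume "z \<in> {1..n}" and "g z \<noteq> f z"
    then have "z \<notin> Vmax" "\<tau>' z \<noteq> \<tau> z" by (auto simp: f_def g_def pol_map_def split: if_splits)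
    with \<open>z \<in> {1..n}\<close> V have "z \<in> Vmin" by blast
    with \<open>\<tau>' z \<noteq> \<tau> z\<close> have "lam + u z < r (z, \<tau>' z) + u (\<tau>' z)"
      and "r (z, \<tau>' z) + u' (\<tau>' z) = lam' + u' z"
      using strict cert' unfolding policies_strictly_optimal_def bias_certificate_def policies_def
      by auto
    with \<open>z \<notin> Vmax\<close> show "(lam - lam') + d z < d (g z)" by (simp add: d_def g_def pol_map_def)
  qed
  have h_strict: "\<forall>z\<in>{1..n}. h z \<noteq> f z \<longrightarrow> d (h z) < (lam - lam') + d z"
  proof (intro ballI impI)
    fix z assume "h z \<noteq> f z"
    then have "z \<in> Vmax" "\<sigma>' z \<noteq> \<sigma> z" by (auto simp: f_def h_def pol_map_def split: if_splits)
    then have "r (z, \<sigma>' z) + u (\<sigma>' z) < lam + u z" "r (z, \<sigma>' z) + u' (\<sigma>' z) = lam' + u' z"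
      using strict cert' unfolding policies_strictly_optimal_def bias_certificate_def policies_def
      by auto
    with \<open>z \<in> Vmax\<close> show "d (h z) < (lam - lam') + d z" by (simp add: d_def h_def pol_map_def)
  qed
  have agree: "g k = f k \<and> h k = f k" if "k \<in> {1..n}" for k
    using drift_sandwich_agree[OF _ pol_map_closed[OF gg pol(1), folded g_def]
        pol_map_closed[OF gg pol(2), folded h_def] g_up g_strict h_down h_strict
        Xi_periodic_points_same_orbit[OF xi f_def] that]
    by simp
  show ?thesis
  proof (intro conjI ballI)
    fix i assume "i \<in> Vmax"
    with V have "i \<in> {1..n}" by blast
    with agree[of i] \<open>i \<in> Vmax\<close> show "\<sigma>' i = \<sigma> i" by (simp add: f_def h_def pol_map_def)
  next
    fix i assume "i \<in> Vmin"
    with V have "i \<in> {1..n}" "i \<notin> Vmax" by blast+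
    with agree[of i] show "\<tau>' i = \<tau> i" by (simp add: f_def g_def pol_map_def)
  qed
qed

lemma cycles_finite_image:
  assumes "C \<in> cycles n f"
  shows "finite C" and "C \<noteq> {}" and "f ` C = C"
proof -
  obtain i k where "0 < k" and per: "(f ^^ k) i = i" and C: "C = {(f ^^ m) i | m. True}"
    using assms unfolding cycles_def by blast
  show "C \<noteq> {}" unfolding C by blast
  have "C \<subseteq> (\<lambda>m. (f ^^ m) i) ` {..<k}"
  proof
    fix x assume "x \<in> C"
    then obtain m where "x = (f ^^ m) i" unfolding C by blast
    then have "x = (f ^^ (m mod k)) i" using funpow_mod_eq[OF per] by simp
    with \<open>0 < k\<close> show "x \<in> (\<lambda>m. (f ^^ m) i) ` {..<k}" by simp
  qed
  then show "finite C" using finite_surj by blast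
  show "f ` C = C"
  proof (intro equalityI subsetI)
    fix x assume "x \<in> f ` C"
    then obtain m where "x = f ((f ^^ m) i)" unfolding C by blast
    then have "x = (f ^^ Suc m) i" by simp
    then show "x \<in> C" unfolding C by blast
  next
    fix x assume "x \<in> C"
    then obtain m where x: "x = (f ^^ m) i" unfolding C by blast
    have "(f ^^ Suc (m + k - 1)) i = (f ^^ m) ((f ^^ k) i)"
      using \<open>0 < k\<close> by (simp add: funpow_add flip: funpow.simps(2))
    then have "x = f ((f ^^ (m + k - 1)) i)" using per x by simp
    then show "x \<in> f ` C" unfolding C by blast
  qed
qed

lemma cycles_subset:
  assumes "\<forall>z\<in>{1..n}. f z \<in> {1..n}" and "C \<in> cycles n f"
  shows "C \<subseteq> {1..n}"
  using assms(2) funpow_closed[OF assms(1)] unfolding cycles_def by blast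

lemma Xi_the_cycle:
  assumes "(\<sigma>, \<tau>) \<in> Xi n E Vmax Vmin"
  shows "the_cycle n Vmax \<sigma> \<tau> \<in> cycles n (pol_map Vmax \<sigma> \<tau>)"
proof -
  have "\<exists>!C. C \<in> cycles n (pol_map Vmax \<sigma> \<tau>)" using assms unfolding Xi_def by simp
  then show ?thesis unfolding the_cycle_def by (rule theI')
qed

lemma certificate_pol_map_step:
  assumes "bias_certificate E Vmax Vmin r lam u \<sigma> \<tau>" and "z \<in> Vmax \<union> Vmin"
  shows "r (z, pol_map Vmax \<sigma> \<tau> z) + u (pol_map Vmax \<sigma> \<tau> z) = lam + u z"
  using assms unfolding bias_certificate_def pol_map_def by auto

lemma lam_pol_certificate:
  assumes gg: "game_graph n E Vmax Vmin" and xi: "(\<sigma>, \<tau>) \<in> Xi n E Vmax Vmin"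
    and cert: "bias_certificate E Vmax Vmin r lam u \<sigma> \<tau>"
  shows "lam_pol n Vmax \<sigma> \<tau> r = lam"
proof -
  define f C where "f = pol_map Vmax \<sigma> \<tau>" and "C = the_cycle n Vmax \<sigma> \<tau>"
  have "C \<in> cycles n f" using Xi_the_cycle[OF xi] by (simp add: f_def C_def)
  note C = cycles_finite_image[OF this]
  have V: "Vmax \<union> Vmin = {1..n}" using gg unfolding game_graph_def by auto
  have "policies E Vmax Vmin \<sigma> \<tau>" using cert unfolding bias_certificate_def by blast
  from cycles_subset[OF pol_map_closed[OF gg this, folded f_def] \<open>C \<in> cycles n f\<close>] V
  have step: "r (z, f z) = lam + u z - u (f z)" if "z \<in> C" for z
    using certificate_pol_map_step[OF cert] that unfolding f_def by (simp add: eq_diff_eq subset_eq)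
  have "inj_on f C" using finite_surj_inj[OF C(1)] C(3) by simp
  have "(\<Sum>z\<in>C. r (z, f z)) = lam * card C + (\<Sum>z\<in>C. u z) - (\<Sum>z\<in>C. u (f z))"
    using step by (simp add: sum.distrib sum_subtractf)
  also have "(\<Sum>z\<in>C. u (f z)) = (\<Sum>z\<in>C. u z)"
    using sum.reindex[OF \<open>inj_on f C\<close>, of u] C(3) by simp
  finally show ?thesis
    using C(1,2) unfolding lam_pol_def Let_def f_def C_def by simp
qed

lemma Xi_reaches_the_cycle:
  assumes gg: "game_graph n E Vmax Vmin" and xi: "(\<sigma>, \<tau>) \<in> Xi n E Vmax Vmin"
    and "policies E Vmax Vmin \<sigma> \<tau>" and "a \<in> {1..n}" and "c \<in> the_cycle n Vmax \<sigma> \<tau>"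
  shows "\<exists>K. (pol_map Vmax \<sigma> \<tau> ^^ K) a = c"
proof -
  define f where "f = pol_map Vmax \<sigma> \<tau>"
  note closed = pol_map_closed[OF gg \<open>policies E Vmax Vmin \<sigma> \<tau>\<close>, folded f_def]
  have "the_cycle n Vmax \<sigma> \<tau> \<in> cycles n f" using Xi_the_cycle[OF xi] by (simp add: f_def)
  then obtain i k where "i \<in> {1..n}" "0 < k" and per: "(f ^^ k) i = i"
    and C: "the_cycle n Vmax \<sigma> \<tau> = {(f ^^ m) i | m. True}"
    unfolding cycles_def by blast
  then obtain m where c: "c = (f ^^ m) i" using \<open>c \<in> the_cycle n Vmax \<sigma> \<tau>\<close> by blast
  then have "c \<in> {1..n}" using funpow_closed[OF closed \<open>i \<in> {1..n}\<close>] by simp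
  have "(f ^^ k) c = c" using per c by (metis funpow_add add.commute o_apply)
  obtain m' p where "0 < p" and per_a: "(f ^^ p) ((f ^^ m') a) = (f ^^ m') a"
    using funpow_eventually_periodic[OF _ closed \<open>a \<in> {1..n}\<close>] by blast
  then obtain s where "c = (f ^^ s) ((f ^^ m') a)"
    using Xi_periodic_points_same_orbit[OF xi f_def _ \<open>0 < p\<close> per_a \<open>c \<in> {1..n}\<close> \<open>0 < k\<close>
      \<open>(f ^^ k) c = c\<close>] funpow_closed[OF closed \<open>a \<in> {1..n}\<close>] by blast
  then show ?thesis unfolding f_def by (metis funpow_add o_apply)
qed

lemma u_pol_certificate:
  assumes gg: "game_graph n E Vmax Vmin" and xi: "(\<sigma>, \<tau>) \<in> Xi n E Vmax Vmin"
    and cert: "bias_certificate E Vmax Vmin r lam u \<sigma> \<tau>" and "a \<in> {1..n}"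
  shows "u_pol n Vmax \<sigma> \<tau> r a = u a - u (Min (the_cycle n Vmax \<sigma> \<tau>))"
proof -
  define f C where "f = pol_map Vmax \<sigma> \<tau>" and "C = the_cycle n Vmax \<sigma> \<tau>"
  define c where "c = Min C"
  have "policies E Vmax Vmin \<sigma> \<tau>" using cert unfolding bias_certificate_def by blast
  note closed = pol_map_closed[OF gg this, folded f_def]
  have "C \<in> cycles n f" using Xi_the_cycle[OF xi] by (simp add: f_def C_def)
  have "c \<in> C" unfolding c_def using cycles_finite_image(1,2)[OF \<open>C \<in> cycles n f\<close>] by (rule Min_in)
  then have "\<exists>K. (f ^^ K) a = c"
    using Xi_reaches_the_cycle[OF gg xi \<open>policies E Vmax Vmin \<sigma> \<tau>\<close> \<open>a \<in> {1..n}\<close>]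
    by (simp add: f_def C_def)
  define K where "K = (LEAST K. (f ^^ K) a = c)"
  have "(f ^^ K) a = c" unfolding K_def using LeastI_ex[OF \<open>\<exists>K. (f ^^ K) a = c\<close>] .
  have V: "Vmax \<union> Vmin = {1..n}" using gg unfolding game_graph_def by auto
  have step: "r (z, f z) - lam = u z - u (f z)" if "z \<in> {1..n}" for z
    using certificate_pol_map_step[OF cert] V that unfolding f_def by (simp add: algebra_simps)
  have "u_pol n Vmax \<sigma> \<tau> r a = (\<Sum>t<K. r ((f ^^ t) a, f ((f ^^ t) a)) - lam)"
    unfolding u_pol_def Let_def lam_pol_certificate[OF gg xi cert] K_def c_def C_def f_def ..
  also have "\<dots> = (\<Sum>t<K. u ((f ^^ t) a) - u ((f ^^ Suc t) a))"
    using step funpow_closed[OF closed \<open>a \<in> {1..n}\<close>] by simp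
  also have "\<dots> = u a - u c"
    using sum_lessThan_telescope'[of "\<lambda>t. u ((f ^^ t) a)" K] \<open>(f ^^ K) a = c\<close> by simp
  finally show ?thesis unfolding c_def C_def .
qed

lemma strictly_optimal_certificate_P_set:
  assumes gg: "game_graph n E Vmax Vmin" and xi: "(\<sigma>, \<tau>) \<in> Xi n E Vmax Vmin"
    and cert: "bias_certificate E Vmax Vmin r lam u \<sigma> \<tau>"
    and strict: "policies_strictly_optimal E Vmax Vmin r lam u \<sigma> \<tau>"
  shows "r \<in> P_set E Vmax Vmin \<sigma> \<tau>"
  using strictly_optimal_certificate_unique[OF gg xi cert strict] cert
  unfolding P_set_def bias_induced_iff_certificate[OF gg] by blast

lemma P_set_strictly_optimal:
  assumes gg: "game_graph n E Vmax Vmin" and rP: "r \<in> P_set E Vmax Vmin \<sigma> \<tau>"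
    and cert: "bias_certificate E Vmax Vmin r lam u \<sigma> \<tau>"
  shows "policies_strictly_optimal E Vmax Vmin r lam u \<sigma> \<tau>"
proof -
  have unique: "(\<forall>i\<in>Vmax. \<sigma>' i = \<sigma> i) \<and> (\<forall>i\<in>Vmin. \<tau>' i = \<tau> i)"
    if "bias_certificate E Vmax Vmin r lam u \<sigma>' \<tau>'" for \<sigma>' \<tau>'
    using rP that unfolding P_set_def bias_induced_iff_certificate[OF gg] by blast
  have "r (i, j) + u j < lam + u i" if "i \<in> Vmax" "(i, j) \<in> E" "j \<noteq> \<sigma> i" for i j
  proof (rule ccontr)
    assume "\<not> r (i, j) + u j < lam + u i"
    moreover have "r (i, j) + u j \<le> lam + u i" using cert that unfolding bias_certificate_def by blast
    ultimately have "r (i, j) + u j = lam + u i" by simp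
    then have "bias_certificate E Vmax Vmin r lam u (\<sigma>(i := j)) \<tau>"
      using cert that unfolding bias_certificate_def policies_def by auto
    with unique that show False by fastforce
  qed
  moreover have "lam + u i < r (i, j) + u j" if "i \<in> Vmin" "(i, j) \<in> E" "j \<noteq> \<tau> i" for i j
  proof (rule ccontr)
    assume "\<not> lam + u i < r (i, j) + u j"
    moreover have "lam + u i \<le> r (i, j) + u j" using cert that unfolding bias_certificate_def by blast
    ultimately have "r (i, j) + u j = lam + u i" by simp
    then have "bias_certificate E Vmax Vmin r lam u \<sigma> (\<tau>(i := j))"
      using cert that unfolding bias_certificate_def policies_def by auto
    with unique that show False by fastforce
  qed
  ultimately show ?thesis unfolding policies_strictly_optimal_def by blast
qed

lemma strictly_optimal_certificate_update_Min:
  assumes "Vmax \<inter> Vmin = {}" and "i \<in> Vmin" and "j \<noteq> \<tau> i" and "lam + u i < x + u j"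
    and "bias_certificate E Vmax Vmin r lam u \<sigma> \<tau>"
    and "policies_strictly_optimal E Vmax Vmin r lam u \<sigma> \<tau>"
  shows "bias_certificate E Vmax Vmin (r((i, j) := x)) lam u \<sigma> \<tau>"
    and "policies_strictly_optimal E Vmax Vmin (r((i, j) := x)) lam u \<sigma> \<tau>"
  using assms unfolding bias_certificate_def policies_strictly_optimal_def by (auto simp: less_imp_le)

lemma strictly_optimal_certificate_update_Max:
  assumes "Vmax \<inter> Vmin = {}" and "i \<in> Vmax" and "j \<noteq> \<sigma> i" and "x + u j < lam + u i"
    and "bias_certificate E Vmax Vmin r lam u \<sigma> \<tau>"
    and "policies_strictly_optimal E Vmax Vmin r lam u \<sigma> \<tau>"
  shows "bias_certificate E Vmax Vmin (r((i, j) := x)) lam u \<sigma> \<tau>"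
    and "policies_strictly_optimal E Vmax Vmin (r((i, j) := x)) lam u \<sigma> \<tau>"
  using assms unfolding bias_certificate_def policies_strictly_optimal_def by (auto simp: less_imp_le)

theorem mainTheorem11:
  fixes n :: nat and E :: "(nat \<times> nat) set" and Vmax Vmin :: "nat set"
    and r :: "nat \<times> nat \<Rightarrow> real" and \<sigma> \<tau> :: "nat \<Rightarrow> nat"
  assumes "game_graph n E Vmax Vmin"
    and "ergodic E Vmax Vmin"
    and "(\<sigma>, \<tau>) \<in> Xi n E Vmax Vmin"
    and "r \<in> P_set E Vmax Vmin \<sigma> \<tau>"
  shows "(\<forall>i j x. (i,j) \<in> E \<longrightarrow> i \<in> Vmin \<longrightarrow> j \<noteq> \<tau> i \<longrightarrow>
            x > lam_pol n Vmax \<sigma> \<tau> r + u_pol n Vmax \<sigma> \<tau> r i - u_pol n Vmax \<sigma> \<tau> r j \<longrightarrow>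
            r((i,j) := x) \<in> P_set E Vmax Vmin \<sigma> \<tau>)
       \<and> (\<forall>i j x. (i,j) \<in> E \<longrightarrow> i \<in> Vmax \<longrightarrow> j \<noteq> \<sigma> i \<longrightarrow>
            x < lam_pol n Vmax \<sigma> \<tau> r + u_pol n Vmax \<sigma> \<tau> r i - u_pol n Vmax \<sigma> \<tau> r j \<longrightarrow>
            r((i,j) := x) \<in> P_set E Vmax Vmin \<sigma> \<tau>)"
proof -
  note gg = assms(1) and xi = assms(3) and rP = assms(4)
  have disj: "Vmax \<inter> Vmin = {}" and E_V: "E \<subseteq> {1..n} \<times> {1..n}"
    using gg unfolding game_graph_def by auto
  obtain lam u where cert: "bias_certificate E Vmax Vmin r lam u \<sigma> \<tau>"
    using rP bias_induced_iff_certificate[OF gg] unfolding P_set_def by blast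
  note strict = P_set_strictly_optimal[OF gg rP cert]
  have threshold: "lam_pol n Vmax \<sigma> \<tau> r + u_pol n Vmax \<sigma> \<tau> r i - u_pol n Vmax \<sigma> \<tau> r j
      = lam + u i - u j" if "(i, j) \<in> E" for i j
    using that E_V lam_pol_certificate[OF gg xi cert] u_pol_certificate[OF gg xi cert] by auto
  show ?thesis
  proof (intro conjI allI impI)
    fix i j x assume "(i, j) \<in> E" "i \<in> Vmin" "j \<noteq> \<tau> i"
      and "lam_pol n Vmax \<sigma> \<tau> r + u_pol n Vmax \<sigma> \<tau> r i - u_pol n Vmax \<sigma> \<tau> r j < x"
    then have "lam + u i < x + u j" using threshold by simp
    from strictly_optimal_certificate_update_Min[OF disj \<open>i \<in> Vmin\<close> \<open>j \<noteq> \<tau> i\<close> this cert strict]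
    show "r((i, j) := x) \<in> P_set E Vmax Vmin \<sigma> \<tau>"
      by (rule strictly_optimal_certificate_P_set[OF gg xi])
  next
    fix i j x assume "(i, j) \<in> E" "i \<in> Vmax" "j \<noteq> \<sigma> i"
      and "x < lam_pol n Vmax \<sigma> \<tau> r + u_pol n Vmax \<sigma> \<tau> r i - u_pol n Vmax \<sigma> \<tau> r j"
    then have "x + u j < lam + u i" using threshold by simp
    from strictly_optimal_certificate_update_Max[OF disj \<open>i \<in> Vmax\<close> \<open>j \<noteq> \<sigma> i\<close> this cert strict]
    show "r((i, j) := x) \<in> P_set E Vmax Vmin \<sigma> \<tau>"
      by (rule strictly_optimal_certificate_P_set[OF gg xi])
  qed
qed

end
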